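(* Fix a nonreal $z\in\mathbb C$ and let $v$ be a nonzero function on $\Gamma$ with $Jv=zv$ at every vertex (such $v$ exists and is unique up to a constant multiple). Then $J$ with domain $\mathcal F(\Gamma)$ is essentially selfadjoint in $\ell^2(\Gamma)$ if and only if $v\notin\ell^2(\Gamma)$.
   Context: Let $\Gamma$ be an infinite connected tree whose vertices are arranged in levels $\ell(x)\in\{0,1,2,\dots\}$: every vertex $x$ is adjacent to exactly one vertex $x'$ with $\ell(x')=\ell(x)+1$; for $\ell(x)\ge 1$ the set $N_x=\{y:\ y'=x\}$ of neighbours of $x$ on level $\ell(x)-1$ is finite and nonempty; $N_x=\emptyset$ if $\ell(x)=0$; there are no other edges. Fix $\lambda_x>0$, $\beta_x\in\mathbb R$ for $x\in\Gamma$. The Jacobi matrix $J$ acts on functions $v:\Gamma\to\mathbb C$ by $(Jv)(x)=\lambda_x v(x')+\beta_x v(x)+\sum_{y\in N_x}\lambda_y v(y)$. $\mathcal F(\Gamma)$ denotes the finitely supported functions on $\Gamma$; $J$ with domain $\mathcal F(\Gamma)$ is a symmetric operator in $\ell^2(\Gamma)$. *)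

theory Defs
  imports "HOL-Analysis.Analysis"
begin

text \<open>Vertices of the tree are the elements of the type 'a. par x is the unique
neighbour x' on the next level, lev x is the level. The edges are exactly the pairs
{x, par x}.\<close>

definition children :: "('a \<Rightarrow> 'a) \<Rightarrow> 'a \<Rightarrow> 'a set" where
  "children par x = {y. par y = x}"

definition level_tree :: "('a \<Rightarrow> 'a) \<Rightarrow> ('a \<Rightarrow> nat) \<Rightarrow> bool" where
  "level_tree par lev \<longleftrightarrow>
     infinite (UNIV :: 'a set) \<and>
     (\<forall>x. lev (par x) = lev x + 1) \<and>
     (\<forall>x. lev x \<ge> 1 \<longrightarrow> finite (children par x) \<and> children par x \<noteq> {}) \<and>
     (\<forall>x. lev x = 0 \<longrightarrow> children par x = {}) \<and>
     (\<forall>x y. \<exists>n m. (par ^^ n) x = (par ^^ m) y)"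

definition jacobi :: "('a \<Rightarrow> 'a) \<Rightarrow> ('a \<Rightarrow> real) \<Rightarrow> ('a \<Rightarrow> real) \<Rightarrow> ('a \<Rightarrow> complex) \<Rightarrow> ('a \<Rightarrow> complex)" where
  "jacobi par lam bet v = (\<lambda>x. complex_of_real (lam x) * v (par x) + complex_of_real (bet x) * v x
      + (\<Sum>y\<in>children par x. complex_of_real (lam y) * v y))"

definition l2 :: "('a \<Rightarrow> complex) \<Rightarrow> bool" where
  "l2 f \<longleftrightarrow> (\<lambda>x. (cmod (f x))\<^sup>2) summable_on UNIV"

definition l2_norm :: "('a \<Rightarrow> complex) \<Rightarrow> real" where
  "l2_norm f = sqrt (\<Sum>\<^sub>\<infinity>x. (cmod (f x))\<^sup>2)"

definition l2_inner :: "('a \<Rightarrow> complex) \<Rightarrow> ('a \<Rightarrow> complex) \<Rightarrow> complex" where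
  "l2_inner f g = (\<Sum>\<^sub>\<infinity>x. f x * cnj (g x))"

definition fin_supp :: "('a \<Rightarrow> complex) \<Rightarrow> bool" where
  "fin_supp f \<longleftrightarrow> finite {x. f x \<noteq> 0}"

text \<open>Operators in l2 are represented by their graphs (sets of pairs (f, Af)).\<close>
definition jacobi_graph :: "('a \<Rightarrow> 'a) \<Rightarrow> ('a \<Rightarrow> real) \<Rightarrow> ('a \<Rightarrow> real) \<Rightarrow> (('a \<Rightarrow> complex) \<times> ('a \<Rightarrow> complex)) set" where
  "jacobi_graph par lam bet = {(f, jacobi par lam bet f) | f. fin_supp f}"

definition op_adjoint :: "(('a \<Rightarrow> complex) \<times> ('a \<Rightarrow> complex)) set \<Rightarrow> (('a \<Rightarrow> complex) \<times> ('a \<Rightarrow> complex)) set" where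
  "op_adjoint G = {(u, w). l2 u \<and> l2 w \<and> (\<forall>(f, g)\<in>G. l2_inner g u = l2_inner f w)}"

definition op_closure :: "(('a \<Rightarrow> complex) \<times> ('a \<Rightarrow> complex)) set \<Rightarrow> (('a \<Rightarrow> complex) \<times> ('a \<Rightarrow> complex)) set" where
  "op_closure G = {(u, w). l2 u \<and> l2 w \<and> (\<exists>F W. (\<forall>n. (F n, W n) \<in> G) \<and>
      (\<lambda>n. l2_norm (F n - u)) \<longlonglongrightarrow> 0 \<and> (\<lambda>n. l2_norm (W n - w)) \<longlonglongrightarrow> 0)}"

definition self_adjoint_op :: "(('a \<Rightarrow> complex) \<times> ('a \<Rightarrow> complex)) set \<Rightarrow> bool" where
  "self_adjoint_op G \<longleftrightarrow> op_adjoint G = G"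

definition ess_self_adjoint :: "(('a \<Rightarrow> complex) \<times> ('a \<Rightarrow> complex)) set \<Rightarrow> bool" where
  "ess_self_adjoint G \<longleftrightarrow> self_adjoint_op (op_closure G)"

end

theory Submission
  imports Defs
begin

text \<open>For nonreal \<open>z\<close>, the solutions of \<open>Ju = zu\<close> form the line spanned by \<open>v\<close>: the
  Wronskian \<open>u(x')v(x) - u(x)v(x')\<close> of two solutions vanishes on every edge, and Green's
  identity on the finite subtree below a vertex shows that a solution vanishing at one vertex
  vanishes everywhere, so \<open>v\<close> has no zeros.

  The adjoint of the closure of \<open>J\<close> on finitely supported functions is \<open>J\<close> acting on all
  square-summable \<open>u\<close> with \<open>Ju\<close> square-summable. If \<open>v\<close> is square-summable, then \<open>(v, zv)\<close>
  lies in the adjoint but not in the symmetric closure, as \<open>\<langle>zv, v\<rangle> \<noteq> \<langle>v, zv\<rangle>\<close>. Otherwise a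
  vector orthogonal to the range of \<open>J - z\<close> is the conjugate of a square-summable solution,
  hence zero; with \<open>\<parallel>(J - z)\<phi>\<parallel> \<ge> \<bar>Im z\<bar> \<parallel>\<phi>\<parallel>\<close> the closure of \<open>J - z\<close> is therefore onto, and
  every element of the adjoint lies in the closure.\<close>

section \<open>Square-summable functions\<close>

lemma cmod_add_square_le: "(cmod (a + b))\<^sup>2 \<le> 2 * (cmod a)\<^sup>2 + 2 * (cmod b)\<^sup>2"
proof -
  have "(cmod (a + b))\<^sup>2 \<le> (cmod a + cmod b)\<^sup>2"
    by (simp add: norm_triangle_ineq power_mono)
  also have "\<dots> \<le> 2 * (cmod a)\<^sup>2 + 2 * (cmod b)\<^sup>2"
    using sum_squares_bound[of "cmod a" "cmod b"] by (simp add: power2_sum)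
  finally show ?thesis .
qed

lemma l2_zero: "l2 (\<lambda>_. 0)"
  by (simp add: l2_def)

lemma l2_add: "l2 f \<Longrightarrow> l2 g \<Longrightarrow> l2 (\<lambda>x. f x + g x)"
  unfolding l2_def
  by (rule summable_on_comparison_test[where f = "\<lambda>x. 2 * (cmod (f x))\<^sup>2 + 2 * (cmod (g x))\<^sup>2"])
    (auto intro!: summable_on_add summable_on_cmult_right cmod_add_square_le)

lemma l2_mult_left: "l2 f \<Longrightarrow> l2 (\<lambda>x. c * f x)"
  by (simp add: l2_def norm_mult power_mult_distrib summable_on_cmult_right)

lemma l2_diff: "l2 f \<Longrightarrow> l2 g \<Longrightarrow> l2 (\<lambda>x. f x - g x)"
  using l2_add[of f "\<lambda>x. - 1 * g x"] l2_mult_left[of g "- 1"] by simp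

lemma l2_cnj: "l2 f \<Longrightarrow> l2 (\<lambda>x. cnj (f x))"
  by (simp add: l2_def)

lemma fin_supp_imp_l2: "fin_supp f \<Longrightarrow> l2 f"
  unfolding l2_def fin_supp_def
  by (rule summable_on_cong_neutral[where T = "{x. f x \<noteq> 0}", THEN iffD2]) auto

lemma fin_supp_zero: "fin_supp (\<lambda>_. 0)"
  by (simp add: fin_supp_def)

lemma fin_supp_add: "fin_supp f \<Longrightarrow> fin_supp g \<Longrightarrow> fin_supp (\<lambda>x. f x + g x)"
  unfolding fin_supp_def by (rule finite_subset[of _ "{x. f x \<noteq> 0} \<union> {x. g x \<noteq> 0}"]) auto

lemma fin_supp_diff: "fin_supp f \<Longrightarrow> fin_supp g \<Longrightarrow> fin_supp (\<lambda>x. f x - g x)"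
  unfolding fin_supp_def by (rule finite_subset[of _ "{x. f x \<noteq> 0} \<union> {x. g x \<noteq> 0}"]) auto

lemma fin_supp_mult_left: "fin_supp f \<Longrightarrow> fin_supp (\<lambda>x. c * f x)"
  unfolding fin_supp_def by (rule finite_subset[of _ "{x. f x \<noteq> 0}"]) auto

lemma infsum_eq_sum_if_vanishes_outside:
  assumes "finite S" and "\<And>x. x \<notin> S \<Longrightarrow> h x = 0"
  shows "infsum h UNIV = sum h S"
proof -
  have "infsum h UNIV = infsum h S" by (rule infsum_cong_neutral) (use assms(2) in auto)
  thus ?thesis using assms(1) by simp
qed

lemma infsum_complex_of_real: "infsum (\<lambda>x. complex_of_real (f x)) A = complex_of_real (infsum f A)"
proof (cases "f summable_on A")
  case True
  thus ?thesis by (metis has_sum_of_real has_sum_infsum infsumI)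
next
  case False
  hence "\<not> (\<lambda>x. complex_of_real (f x)) summable_on A"
    using summable_on_Re[of "\<lambda>x. complex_of_real (f x)" A] by auto
  thus ?thesis using False by (simp add: infsum_not_exists)
qed

lemma abs_l2_inner_summable:
  assumes "l2 f" and "l2 g"
  shows "(\<lambda>x. cmod (f x * cnj (g x))) summable_on UNIV"
proof -
  have "(\<lambda>x. (1 / 2) * ((cmod (f x))\<^sup>2 + (cmod (g x))\<^sup>2)) summable_on UNIV"
    using assms unfolding l2_def by (intro summable_on_cmult_right summable_on_add)
  moreover have "cmod (f x * cnj (g x)) \<le> (1 / 2) * ((cmod (f x))\<^sup>2 + (cmod (g x))\<^sup>2)" for x
    using sum_squares_bound[of "cmod (f x)" "cmod (g x)"] by (simp add: norm_mult)
  ultimately show ?thesis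
    by (rule summable_on_comparison_test) simp
qed

lemma l2_inner_summable: "l2 f \<Longrightarrow> l2 g \<Longrightarrow> (\<lambda>x. f x * cnj (g x)) summable_on UNIV"
  using abs_l2_inner_summable summable_on_iff_abs_summable_on_complex by blast

lemma l2_norm_nonneg: "l2_norm f \<ge> 0"
  by (simp add: l2_norm_def infsum_nonneg)

lemma l2_norm_square: "(l2_norm f)\<^sup>2 = infsum (\<lambda>x. (cmod (f x))\<^sup>2) UNIV"
  by (simp add: l2_norm_def infsum_nonneg)

lemma l2_inner_commute: "l2_inner f g = cnj (l2_inner g f)"
  unfolding l2_inner_def by (subst infsum_cnj[symmetric]) (simp add: mult.commute)

lemma l2_inner_self: "l2_inner f f = complex_of_real ((l2_norm f)\<^sup>2)"
proof -
  have "l2_inner f f = infsum (\<lambda>x. complex_of_real ((cmod (f x))\<^sup>2)) UNIV"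
    unfolding l2_inner_def by (rule infsum_cong) (simp add: complex_norm_square del: of_real_power)
  thus ?thesis by (simp only: infsum_complex_of_real l2_norm_square)
qed

lemma l2_inner_add_left:
  "l2 f \<Longrightarrow> l2 g \<Longrightarrow> l2 h \<Longrightarrow> l2_inner (\<lambda>x. f x + g x) h = l2_inner f h + l2_inner g h"
  by (simp add: l2_inner_def distrib_right infsum_add l2_inner_summable)

lemma l2_inner_diff_left:
  "l2 f \<Longrightarrow> l2 g \<Longrightarrow> l2 h \<Longrightarrow> l2_inner (\<lambda>x. f x - g x) h = l2_inner f h - l2_inner g h"
  using l2_inner_add_left[of f "\<lambda>x. - g x" h] l2_mult_left[of g "- 1"]
  by (simp add: l2_inner_def infsum_uminus)

lemma l2_inner_mult_left: "l2_inner (\<lambda>x. c * f x) h = c * l2_inner f h"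
  by (simp add: l2_inner_def mult.assoc infsum_cmult_right')

lemma l2_inner_mult_right: "l2_inner f (\<lambda>x. c * h x) = cnj c * l2_inner f h"
proof -
  have "(\<lambda>x. f x * cnj (c * h x)) = (\<lambda>x. cnj c * (f x * cnj (h x)))" by (simp add: ac_simps)
  thus ?thesis by (simp add: l2_inner_def infsum_cmult_right')
qed

lemma fin_supp_mult_summable: "fin_supp f \<Longrightarrow> (\<lambda>x. f x * g x) summable_on UNIV"
  unfolding fin_supp_def
  by (rule summable_on_cong_neutral[where T = "{x. f x \<noteq> 0}", THEN iffD2]) auto

lemma l2_inner_fin_supp_add_left:
  "fin_supp f \<Longrightarrow> fin_supp g \<Longrightarrow> l2_inner (\<lambda>x. f x + g x) h = l2_inner f h + l2_inner g h"
  by (simp add: l2_inner_def distrib_right infsum_add fin_supp_mult_summable)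

lemma l2_norm_mult_left: "l2_norm (\<lambda>x. c * f x) = cmod c * l2_norm f"
  by (simp add: l2_norm_def norm_mult power_mult_distrib infsum_cmult_right' real_sqrt_mult)

lemma l2_norm_eq_0_iff: "l2 f \<Longrightarrow> l2_norm f = 0 \<longleftrightarrow> f = (\<lambda>_. 0)"
proof
  assume "l2 f" and "l2_norm f = 0"
  hence "infsum (\<lambda>x. (cmod (f x))\<^sup>2) UNIV \<le> 0" by (simp add: l2_norm_square[symmetric])
  hence "(cmod (f x))\<^sup>2 = 0" for x
    by (rule nonneg_infsum_le_0D) (use \<open>l2 f\<close> in \<open>auto simp: l2_def\<close>)
  thus "f = (\<lambda>_. 0)" by auto
qed (simp add: l2_norm_def)

lemma finite_sum_le_l2_norm_square:
  "l2 h \<Longrightarrow> finite F \<Longrightarrow> (\<Sum>x\<in>F. (cmod (h x))\<^sup>2) \<le> (l2_norm h)\<^sup>2"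
  unfolding l2_norm_square l2_def by (rule finite_sum_le_infsum) auto

lemma abs_le_l2_norm: "l2 h \<Longrightarrow> cmod (h x) \<le> l2_norm h"
  using finite_sum_le_l2_norm_square[of h "{x}"] l2_norm_nonneg[of h]
  by (auto intro: power2_le_imp_le)

lemma l2_norm_le_if_pointwise_limit:
  assumes lim: "\<And>x. (\<lambda>m. g m x) \<longlonglongrightarrow> h x" and "e \<ge> 0"
    and bound: "\<And>m. m \<ge> k \<Longrightarrow> l2 (g m) \<and> l2_norm (g m) \<le> e"
  shows "l2 h" and "l2_norm h \<le> e"
proof -
  have sums: "(\<Sum>x\<in>F. (cmod (h x))\<^sup>2) \<le> e\<^sup>2" if "finite F" for F
  proof (rule LIMSEQ_le_const2)
    show "(\<lambda>m. \<Sum>x\<in>F. (cmod (g m x))\<^sup>2) \<longlonglongrightarrow> (\<Sum>x\<in>F. (cmod (h x))\<^sup>2)"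
      by (intro tendsto_intros lim)
    have "(\<Sum>x\<in>F. (cmod (g m x))\<^sup>2) \<le> e\<^sup>2" if "m \<ge> k" for m
    proof -
      have "l2_norm (g m) \<le> e" "l2 (g m)" using bound[OF that] by auto
      hence "(l2_norm (g m))\<^sup>2 \<le> e\<^sup>2" by (simp add: l2_norm_nonneg power_mono)
      thus ?thesis using finite_sum_le_l2_norm_square[OF \<open>l2 (g m)\<close> \<open>finite F\<close>] by linarith
    qed
    thus "\<exists>N. \<forall>m\<ge>N. (\<Sum>x\<in>F. (cmod (g m x))\<^sup>2) \<le> e\<^sup>2" by blast
  qed
  show "l2 h" unfolding l2_def
    by (rule nonneg_bdd_above_summable_on) (use sums in \<open>auto simp: bdd_above_def\<close>)
  hence "(l2_norm h)\<^sup>2 \<le> e\<^sup>2"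
    unfolding l2_norm_square l2_def by (rule infsum_le_finite_sums) (use sums in auto)
  thus "l2_norm h \<le> e" using \<open>e \<ge> 0\<close> by (rule power2_le_imp_le)
qed

section \<open>The Hilbert space \<open>\<ell>\<^sup>2\<close>\<close>

lemma Cauchy_if_dist_le_mult:
  fixes X :: "nat \<Rightarrow> 'a::metric_space" and Y :: "nat \<Rightarrow> 'b::metric_space"
  assumes "Cauchy Y" and bound: "\<And>m n. dist (X m) (X n) \<le> C * dist (Y m) (Y n)"
  shows "Cauchy X"
proof (rule metric_CauchyI)
  fix e :: real
  assume "e > 0"
  hence "e / (\<bar>C\<bar> + 1) > 0" by simp
  then obtain k where k: "\<And>m n. m \<ge> k \<Longrightarrow> n \<ge> k \<Longrightarrow> dist (Y m) (Y n) < e / (\<bar>C\<bar> + 1)"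
    using \<open>Cauchy Y\<close> unfolding Cauchy_def by blast
  have "dist (X m) (X n) < e" if "m \<ge> k" "n \<ge> k" for m n
  proof -
    have "dist (X m) (X n) \<le> \<bar>C\<bar> * dist (Y m) (Y n)"
      using bound[of m n] abs_ge_self[of C] by (meson mult_right_mono zero_le_dist order_trans)
    also have "\<dots> \<le> \<bar>C\<bar> * (e / (\<bar>C\<bar> + 1))"
      using k[OF that] by (intro mult_left_mono) simp_all
    also have "\<dots> < e"
      using \<open>e > 0\<close> by (simp add: field_simps)
    finally show ?thesis .
  qed
  thus "\<exists>k. \<forall>m\<ge>k. \<forall>n\<ge>k. dist (X m) (X n) < e" by blast
qed

typedef 'a ell2 = "{f :: 'a \<Rightarrow> complex. l2 f}"
  using l2_zero by blast

setup_lifting type_definition_ell2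

instantiation ell2 :: (type) real_vector
begin
lift_definition zero_ell2 :: "'a ell2" is "\<lambda>_. 0" by (simp add: l2_zero)
lift_definition plus_ell2 :: "'a ell2 \<Rightarrow> 'a ell2 \<Rightarrow> 'a ell2" is "\<lambda>f g x. f x + g x"
  by (simp add: l2_add)
lift_definition minus_ell2 :: "'a ell2 \<Rightarrow> 'a ell2 \<Rightarrow> 'a ell2" is "\<lambda>f g x. f x - g x"
  by (simp add: l2_diff)
lift_definition uminus_ell2 :: "'a ell2 \<Rightarrow> 'a ell2" is "\<lambda>f x. - f x"
  using l2_mult_left[of _ "- 1"] by simp
lift_definition scaleR_ell2 :: "real \<Rightarrow> 'a ell2 \<Rightarrow> 'a ell2" is "\<lambda>r f x. complex_of_real r * f x"
  by (simp add: l2_mult_left)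
instance
  by standard (transfer; simp add: algebra_simps)+
end

text \<open>The real part of \<open>l2_inner\<close> induces the same norm, so the real inner-product and
  metric theory of HOL-Analysis applies to \<open>ell2\<close>.\<close>
instantiation ell2 :: (type) real_inner
begin
lift_definition inner_ell2 :: "'a ell2 \<Rightarrow> 'a ell2 \<Rightarrow> real" is "\<lambda>f g. Re (l2_inner f g)" .
definition norm_ell2 :: "'a ell2 \<Rightarrow> real" where "norm_ell2 x = sqrt (inner x x)"
definition dist_ell2 :: "'a ell2 \<Rightarrow> 'a ell2 \<Rightarrow> real" where "dist_ell2 x y = norm (x - y)"
definition sgn_ell2 :: "'a ell2 \<Rightarrow> 'a ell2" where "sgn_ell2 x = x /\<^sub>R norm x"
definition uniformity_ell2 :: "('a ell2 \<times> 'a ell2) filter"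
  where "uniformity_ell2 = (INF e\<in>{0 <..}. principal {(x, y). dist x y < e})"
definition open_ell2 :: "'a ell2 set \<Rightarrow> bool"
  where "open_ell2 S = (\<forall>x\<in>S. \<forall>\<^sub>F (x', y) in uniformity. x' = x \<longrightarrow> y \<in> S)"
instance
proof
  fix x y z :: "'a ell2" and r :: real
  show "inner x y = inner y x"
    by transfer (subst l2_inner_commute, simp)
  show "inner (x + y) z = inner x z + inner y z"
    by transfer (simp add: l2_inner_add_left)
  show "inner (r *\<^sub>R x) y = r * inner x y"
    by transfer (simp add: l2_inner_mult_left)
  show "0 \<le> inner x x"
    by transfer (simp add: l2_inner_self)
  show "inner x x = 0 \<longleftrightarrow> x = 0"
    by transfer (simp add: l2_inner_self l2_norm_eq_0_iff)
qed (simp_all add: norm_ell2_def dist_ell2_def sgn_ell2_def uniformity_ell2_def open_ell2_def)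
end

lemma l2_Rep_ell2: "l2 (Rep_ell2 x)"
  using Rep_ell2 by simp

lemma norm_ell2_eq_l2_norm: "norm x = l2_norm (Rep_ell2 x)"
  by (simp add: norm_ell2_def inner_ell2.rep_eq l2_inner_self l2_norm_nonneg)

lemma inner_Abs_ell2: "l2 f \<Longrightarrow> l2 g \<Longrightarrow> inner (Abs_ell2 f) (Abs_ell2 g) = Re (l2_inner f g)"
  by (simp add: inner_ell2.rep_eq Abs_ell2_inverse)

lemma norm_Abs_ell2: "l2 f \<Longrightarrow> norm (Abs_ell2 f) = l2_norm f"
  by (simp add: norm_ell2_eq_l2_norm Abs_ell2_inverse)

lemma Abs_ell2_add: "l2 f \<Longrightarrow> l2 g \<Longrightarrow> Abs_ell2 f + Abs_ell2 g = Abs_ell2 (\<lambda>x. f x + g x)"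
  by (simp add: plus_ell2.abs_eq eq_onp_def)

lemma Abs_ell2_diff: "l2 f \<Longrightarrow> l2 g \<Longrightarrow> Abs_ell2 f - Abs_ell2 g = Abs_ell2 (\<lambda>x. f x - g x)"
  by (simp add: minus_ell2.abs_eq eq_onp_def)

lemma scaleR_Abs_ell2: "l2 f \<Longrightarrow> r *\<^sub>R Abs_ell2 f = Abs_ell2 (\<lambda>x. complex_of_real r * f x)"
  by (simp add: scaleR_ell2.abs_eq eq_onp_def)

lemma Abs_ell2_zero: "Abs_ell2 (\<lambda>_. 0) = 0"
  by (simp add: zero_ell2_def)

lemma dist_Abs_ell2: "l2 f \<Longrightarrow> l2 g \<Longrightarrow> dist (Abs_ell2 f) (Abs_ell2 g) = l2_norm (\<lambda>x. f x - g x)"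
  by (simp add: dist_norm Abs_ell2_diff norm_Abs_ell2 l2_diff)

lemma tendsto_Abs_ell2_iff:
  assumes "\<And>n. l2 (F n)" and "l2 f"
  shows "(\<lambda>n. Abs_ell2 (F n)) \<longlonglongrightarrow> Abs_ell2 f \<longleftrightarrow> (\<lambda>n. l2_norm (\<lambda>x. F n x - f x)) \<longlonglongrightarrow> 0"
  using assms by (simp add: tendsto_iff dist_Abs_ell2 l2_norm_nonneg)

lemma l2_triangle: "l2 f \<Longrightarrow> l2 g \<Longrightarrow> l2_norm (\<lambda>x. f x + g x) \<le> l2_norm f + l2_norm g"
  using norm_triangle_ineq[of "Abs_ell2 f" "Abs_ell2 g"]
  by (simp add: Abs_ell2_add norm_Abs_ell2 l2_add)

lemma l2_inner_cauchy_schwarz: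
  assumes "l2 f" and "l2 g"
  shows "cmod (l2_inner f g) \<le> l2_norm f * l2_norm g"
proof -
  define F G where "F x = complex_of_real (cmod (f x))" and "G x = complex_of_real (cmod (g x))" for x
  have l2: "l2 F" "l2 G" and norms: "l2_norm F = l2_norm f" "l2_norm G = l2_norm g"
    using assms by (simp_all add: F_def G_def l2_def l2_norm_def)
  have "cmod (l2_inner f g) \<le> infsum (\<lambda>x. cmod (f x * cnj (g x))) UNIV"
    unfolding l2_inner_def by (rule norm_infsum_bound) (rule abs_l2_inner_summable[OF assms])
  also have "\<dots> = Re (l2_inner F G)"
  proof -
    have "(\<lambda>x. F x * cnj (G x)) = (\<lambda>x. complex_of_real (cmod (f x * cnj (g x))))"
      by (simp add: F_def G_def norm_mult)
    thus ?thesis by (simp add: l2_inner_def infsum_complex_of_real)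
  qed
  also have "\<dots> = inner (Abs_ell2 F) (Abs_ell2 G)"
    by (simp add: inner_Abs_ell2 l2)
  also have "\<dots> \<le> l2_norm f * l2_norm g"
    using norm_cauchy_schwarz[of "Abs_ell2 F" "Abs_ell2 G"] by (simp add: norm_Abs_ell2 l2 norms)
  finally show ?thesis .
qed

lemma tendsto_l2_inner_left:
  assumes "\<And>n. l2 (F n)" and "l2 f" and "l2 h"
    and lim: "(\<lambda>n. l2_norm (\<lambda>x. F n x - f x)) \<longlonglongrightarrow> 0"
  shows "(\<lambda>n. l2_inner (F n) h) \<longlonglongrightarrow> l2_inner f h"
proof -
  have "norm (l2_inner (F n) h - l2_inner f h) \<le> l2_norm (\<lambda>x. F n x - f x) * l2_norm h" for n
    using l2_inner_cauchy_schwarz[OF l2_diff[OF assms(1,2)] assms(3)]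
    by (simp only: l2_inner_diff_left assms)
  moreover have "(\<lambda>n. l2_norm (\<lambda>x. F n x - f x) * l2_norm h) \<longlonglongrightarrow> 0"
    using tendsto_mult_left_zero[OF lim] .
  ultimately have "(\<lambda>n. l2_inner (F n) h - l2_inner f h) \<longlonglongrightarrow> 0"
    by (rule Lim_null_comparison[OF always_eventually, OF allI])
  thus ?thesis by (rule LIM_zero_cancel)
qed

lemma tendsto_pointwise_if_l2:
  assumes "\<And>n. l2 (F n)" and "l2 f"
    and lim: "(\<lambda>n. l2_norm (\<lambda>x. F n x - f x)) \<longlonglongrightarrow> 0"
  shows "(\<lambda>n. F n x) \<longlonglongrightarrow> f x"
proof -
  have "norm (F n x - f x) \<le> l2_norm (\<lambda>x. F n x - f x)" for n
    by (rule abs_le_l2_norm[OF l2_diff[OF assms(1,2)]])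
  hence "(\<lambda>n. F n x - f x) \<longlonglongrightarrow> 0"
    by (rule Lim_null_comparison[OF always_eventually, OF allI, OF _ lim])
  thus ?thesis by (rule LIM_zero_cancel)
qed

lemma dist_Rep_ell2_le: "dist (Rep_ell2 a x) (Rep_ell2 b x) \<le> dist a b"
  using abs_le_l2_norm[OF l2_Rep_ell2[of "a - b"], of x]
  by (simp add: dist_norm norm_ell2_eq_l2_norm minus_ell2.rep_eq)

lemma Cauchy_ell2_close_to_pointwise_limit:
  assumes "Cauchy X" and lim: "\<And>x. (\<lambda>n. Rep_ell2 (X n) x) \<longlonglongrightarrow> f x" and "e > 0"
  obtains k where "\<And>n. n \<ge> k \<Longrightarrow> l2 (\<lambda>x. Rep_ell2 (X n) x - f x)"
    and "\<And>n. n \<ge> k \<Longrightarrow> l2_norm (\<lambda>x. Rep_ell2 (X n) x - f x) \<le> e"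
proof -
  obtain k where k: "\<And>m n. m \<ge> k \<Longrightarrow> n \<ge> k \<Longrightarrow> dist (X m) (X n) < e"
    using \<open>Cauchy X\<close> \<open>e > 0\<close> unfolding Cauchy_def by blast
  have "l2 (\<lambda>x. Rep_ell2 (X n) x - f x) \<and> l2_norm (\<lambda>x. Rep_ell2 (X n) x - f x) \<le> e"
    if "n \<ge> k" for n
  proof -
    have conv: "(\<lambda>m. Rep_ell2 (X n - X m) x) \<longlonglongrightarrow> Rep_ell2 (X n) x - f x" for x
      unfolding minus_ell2.rep_eq by (intro tendsto_diff tendsto_const lim)
    have bound: "l2 (Rep_ell2 (X n - X m)) \<and> l2_norm (Rep_ell2 (X n - X m)) \<le> e" if "m \<ge> k" for m
      using k[OF \<open>n \<ge> k\<close> that] l2_Rep_ell2[of "X n - X m"]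
      by (simp add: dist_norm norm_ell2_eq_l2_norm)
    show ?thesis
      using l2_norm_le_if_pointwise_limit[OF conv less_imp_le[OF \<open>e > 0\<close>] bound] by blast
  qed
  thus thesis using that by blast
qed

instance ell2 :: (type) complete_space
proof
  fix X :: "nat \<Rightarrow> 'a ell2"
  assume "Cauchy X"
  have "Cauchy (\<lambda>n. Rep_ell2 (X n) x)" for x
    using \<open>Cauchy X\<close> by (rule Cauchy_if_dist_le_mult[where C = 1]) (simp add: dist_Rep_ell2_le)
  then obtain f where f: "\<And>x. (\<lambda>n. Rep_ell2 (X n) x) \<longlonglongrightarrow> f x"
    unfolding Cauchy_convergent_iff convergent_LIMSEQ_iff by (rule that)
  obtain k where k: "\<And>n. n \<ge> k \<Longrightarrow> l2 (\<lambda>x. Rep_ell2 (X n) x - f x)"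
    using Cauchy_ell2_close_to_pointwise_limit[OF \<open>Cauchy X\<close> f zero_less_one] by metis
  have "l2 f"
    using l2_diff[OF l2_Rep_ell2[of "X k"] k[OF order_refl]] by simp
  have "X \<longlonglongrightarrow> Abs_ell2 f"
  proof (rule LIMSEQ_I)
    fix r :: real
    assume "r > 0"
    then obtain k where k: "\<And>n. n \<ge> k \<Longrightarrow> l2_norm (\<lambda>x. Rep_ell2 (X n) x - f x) \<le> r / 2"
      using Cauchy_ell2_close_to_pointwise_limit[OF \<open>Cauchy X\<close> f half_gt_zero[OF \<open>r > 0\<close>]]
      by metis
    have "norm (X n - Abs_ell2 f) = l2_norm (\<lambda>x. Rep_ell2 (X n) x - f x)" for n
      by (simp add: norm_ell2_eq_l2_norm minus_ell2.rep_eq Abs_ell2_inverse \<open>l2 f\<close>)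
    moreover have "r / 2 < r" using \<open>r > 0\<close> by simp
    ultimately show "\<exists>k. \<forall>n\<ge>k. norm (X n - Abs_ell2 f) < r"
      using k by (metis le_less_trans)
  qed
  thus "convergent X" unfolding convergent_def by blast
qed

section \<open>Subspaces with trivial orthogonal complement are dense\<close>

lemma subspace_closure:
  fixes W :: "'a::real_normed_vector set"
  assumes "subspace W"
  shows "subspace (closure W)"
  unfolding subspace_def
proof (intro conjI ballI allI)
  show "0 \<in> closure W"
    using assms closure_subset subspace_0 by blast
  show "x + y \<in> closure W" if x: "x \<in> closure W" and y: "y \<in> closure W" for x y
  proof -
    obtain X Y where "\<And>n. X n \<in> W" "X \<longlonglongrightarrow> x" "\<And>n. Y n \<in> W" "Y \<longlonglongrightarrow> y"
      using x y unfolding closure_sequential by metis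
    thus ?thesis
      unfolding closure_sequential
      by (intro exI[of _ "\<lambda>n. X n + Y n"]) (simp add: subspace_add[OF assms] tendsto_add)
  qed
  show "c *\<^sub>R x \<in> closure W" if x: "x \<in> closure W" for c x
  proof -
    obtain X where "\<And>n. X n \<in> W" "X \<longlonglongrightarrow> x"
      using x unfolding closure_sequential by metis
    thus ?thesis
      unfolding closure_sequential
      by (intro exI[of _ "\<lambda>n. c *\<^sub>R X n"]) (simp add: subspace_scale[OF assms] tendsto_scaleR)
  qed
qed

lemma parallelogram_law:
  fixes a b :: "'a::real_inner"
  shows "(norm (a - b))\<^sup>2 + (norm (a + b))\<^sup>2 = 2 * (norm a)\<^sup>2 + 2 * (norm b)\<^sup>2"
  by (simp add: power2_norm_eq_inner algebra_simps inner_commute)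

text \<open>Two points nearly closest to \<open>g\<close> have a midpoint in \<open>W\<close>, hence at distance at
  least \<open>infdist g W\<close> from \<open>g\<close>; the parallelogram law turns this into a bound on their distance.\<close>
lemma minimising_sequence_Cauchy:
  fixes W :: "'a::real_inner set"
  assumes "convex W" and y: "\<And>n. y n \<in> W"
    and y_close: "\<And>n. (dist g (y n))\<^sup>2 < (infdist g W)\<^sup>2 + 1 / Suc n"
  shows "Cauchy y"
proof -
  define d where "d = infdist g W"
  have y_bound: "(dist (y m) (y n))\<^sup>2 \<le> 2 / Suc m + 2 / Suc n" for m n
  proof -
    have "(1 / 2) *\<^sub>R y m + (1 / 2) *\<^sub>R y n \<in> W"
      using convexD[OF assms(1) y y] by simp
    hence "d \<le> norm (g - ((1 / 2) *\<^sub>R y m + (1 / 2) *\<^sub>R y n))"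
      unfolding d_def dist_norm[symmetric] by (rule infdist_le)
    hence "d\<^sup>2 \<le> (norm (g - ((1 / 2) *\<^sub>R y m + (1 / 2) *\<^sub>R y n)))\<^sup>2"
      using infdist_nonneg[of g W] unfolding d_def by (rule power_mono)
    also have "\<dots> = (norm ((g - y m) + (g - y n)))\<^sup>2 / 4"
    proof -
      have "(g - y m) + (g - y n) = 2 *\<^sub>R (g - ((1 / 2) *\<^sub>R y m + (1 / 2) *\<^sub>R y n))"
        by (simp add: algebra_simps scaleR_2)
      thus ?thesis by (simp add: power2_eq_square)
    qed
    finally have "4 * d\<^sup>2 \<le> (norm ((g - y m) + (g - y n)))\<^sup>2" by simp
    moreover have "(dist (y m) (y n))\<^sup>2 = (norm ((g - y m) - (g - y n)))\<^sup>2"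
      by (simp add: dist_norm norm_minus_commute)
    ultimately show ?thesis
      using parallelogram_law[of "g - y m" "g - y n"] y_close[of m] y_close[of n]
      by (simp add: dist_norm d_def)
  qed
  show ?thesis
  proof (rule metric_CauchyI)
    fix e :: real
    assume "e > 0"
    then obtain k where k: "inverse (real (Suc k)) < e\<^sup>2 / 4"
      using reals_Archimedean[of "e\<^sup>2 / 4"] by auto
    have "dist (y m) (y n) < e" if "m \<ge> k" "n \<ge> k" for m n
    proof -
      have "1 / real (Suc m) \<le> inverse (real (Suc k))" "1 / real (Suc n) \<le> inverse (real (Suc k))"
        using that by (auto simp: field_simps)
      hence "(dist (y m) (y n))\<^sup>2 < e\<^sup>2"
        using y_bound[of m n] k by simp
      thus ?thesis using \<open>e > 0\<close> by (simp add: power_less_imp_less_base)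
    qed
    thus "\<exists>k. \<forall>m\<ge>k. \<forall>n\<ge>k. dist (y m) (y n) < e" by blast
  qed
qed

lemma closest_point_in_closure:
  fixes W :: "'a::{real_inner,complete_space} set"
  assumes "convex W" and "W \<noteq> {}"
  obtains y where "y \<in> closure W" and "dist g y = infdist g W"
proof -
  define d where "d = infdist g W"
  have "d \<ge> 0" by (simp add: d_def infdist_nonneg)
  have "\<exists>y\<in>W. (dist g y)\<^sup>2 < d\<^sup>2 + 1 / Suc n" for n
  proof -
    have "Inf (dist g ` W) < sqrt (d\<^sup>2 + 1 / Suc n)"
      using real_less_rsqrt[of d] by (simp add: d_def infdist_notempty assms(2))
    then obtain y where "y \<in> W" "dist g y < sqrt (d\<^sup>2 + 1 / Suc n)"
      using cInf_lessD[of "dist g ` W"] assms(2) by blast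
    thus ?thesis
      by (metis zero_le_dist real_sqrt_less_iff real_sqrt_abs abs_of_nonneg)
  qed
  then obtain y where y: "\<And>n. y n \<in> W" and y_close: "\<And>n. (dist g (y n))\<^sup>2 < d\<^sup>2 + 1 / Suc n"
    by metis
  obtain y0 where "y \<longlonglongrightarrow> y0"
    using minimising_sequence_Cauchy[OF assms(1) y y_close[unfolded d_def]]
    unfolding Cauchy_convergent_iff convergent_def by blast
  have "y0 \<in> closure W"
    using y \<open>y \<longlonglongrightarrow> y0\<close> unfolding closure_sequential by blast
  have "(dist g y0)\<^sup>2 \<le> d\<^sup>2"
  proof (rule LIMSEQ_le)
    show "(\<lambda>n. (dist g (y n))\<^sup>2) \<longlonglongrightarrow> (dist g y0)\<^sup>2"
      by (intro tendsto_intros \<open>y \<longlonglongrightarrow> y0\<close>)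
    show "(\<lambda>n. d\<^sup>2 + 1 / real (Suc n)) \<longlonglongrightarrow> d\<^sup>2"
      using LIMSEQ_inverse_real_of_nat_add[of "d\<^sup>2"] by (simp add: divide_inverse)
    show "\<exists>k. \<forall>n\<ge>k. (dist g (y n))\<^sup>2 \<le> d\<^sup>2 + 1 / real (Suc n)"
      using y_close less_imp_le by blast
  qed
  hence "dist g y0 \<le> d"
    using \<open>d \<ge> 0\<close> by (rule power2_le_imp_le)
  moreover have "d \<le> dist g y0"
    using infdist_triangle[of g W y0] \<open>y0 \<in> closure W\<close> in_closure_iff_infdist_zero[OF assms(2)]
    by (simp add: d_def)
  ultimately show thesis
    using that \<open>y0 \<in> closure W\<close> by (simp add: d_def)
qed

lemma inner_eq_0_if_norm_le_norm_diff:
  fixes r w :: "'a::real_inner"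
  assumes "\<And>t. norm r \<le> norm (r - t *\<^sub>R w)"
  shows "inner r w = 0"
proof (cases "w = 0")
  case False
  define t where "t = inner r w / (norm w)\<^sup>2"
  have "(norm r)\<^sup>2 \<le> (norm (r - t *\<^sub>R w))\<^sup>2"
    using assms[of t] by (simp add: power_mono)
  also have "\<dots> = (norm r)\<^sup>2 - 2 * t * inner r w + t\<^sup>2 * (norm w)\<^sup>2"
    by (simp only: power2_norm_eq_inner)
      (simp add: inner_diff_left inner_diff_right inner_commute algebra_simps power2_eq_square)
  also have "\<dots> = (norm r)\<^sup>2 - (inner r w)\<^sup>2 / (norm w)\<^sup>2"
    using False by (simp add: t_def field_simps power2_eq_square)
  finally show ?thesis
    using False by (simp add: divide_le_0_iff)
qed simp

lemma dense_if_orthogonal_complement_trivial: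
  fixes W :: "'a::{real_inner,complete_space} set"
  assumes "subspace W" and orth: "\<And>r. (\<forall>w\<in>W. inner r w = 0) \<Longrightarrow> r = 0"
  shows "closure W = UNIV"
proof -
  have "g \<in> closure W" for g
  proof -
    have "W \<noteq> {}" using subspace_0[OF assms(1)] by blast
    then obtain y where y: "y \<in> closure W" "dist g y = infdist g W"
      using closest_point_in_closure subspace_imp_convex[OF assms(1)] by metis
    have "inner (g - y) w = 0" if "w \<in> W" for w
    proof (rule inner_eq_0_if_norm_le_norm_diff)
      fix t
      have "y + t *\<^sub>R w \<in> closure W"
        using subspace_closure[OF assms(1)] y(1) closure_subset that
        by (meson subsetD subspace_add subspace_scale)
      hence "infdist g W \<le> dist g (y + t *\<^sub>R w)"
        using infdist_triangle[of g W "y + t *\<^sub>R w"] in_closure_iff_infdist_zero[OF \<open>W \<noteq> {}\<close>]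
        by simp
      thus "norm (g - y) \<le> norm (g - y - t *\<^sub>R w)"
        using y(2) by (simp add: dist_norm diff_diff_eq)
    qed
    hence "g - y = 0" by (rule orth[OF ballI])
    thus ?thesis using y(1) by simp
  qed
  thus ?thesis by blast
qed

section \<open>Jacobi matrices on the tree\<close>

definition delta :: "'a \<Rightarrow> complex \<Rightarrow> 'a \<Rightarrow> complex" where
  "delta a c = (\<lambda>y. if y = a then c else 0)"

lemma fin_supp_delta: "fin_supp (delta a c)"
  unfolding fin_supp_def delta_def by (rule finite_subset[of _ "{a}"]) auto

lemma l2_inner_delta_left: "l2_inner (delta a c) g = c * cnj (g a)"
  unfolding l2_inner_def by (subst infsum_eq_sum_if_vanishes_outside[of "{a}"]) (auto simp: delta_def)

locale jacobi_tree =
  fixes par :: "'a \<Rightarrow> 'a" and lev :: "'a \<Rightarrow> nat" and lam bet :: "'a \<Rightarrow> real"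
  assumes level_tree: "level_tree par lev" and lam_pos: "\<And>x. lam x > 0"
begin

abbreviation J :: "('a \<Rightarrow> complex) \<Rightarrow> 'a \<Rightarrow> complex" where
  "J \<equiv> jacobi par lam bet"

abbreviation N :: "'a \<Rightarrow> 'a set" where
  "N \<equiv> children par"

lemma lev_par: "lev (par x) = Suc (lev x)"
  using level_tree unfolding level_tree_def by simp

lemma finite_children: "finite (N x)"
  using level_tree unfolding level_tree_def by (cases "lev x = 0") auto

lemma mem_children_iff: "y \<in> N x \<longleftrightarrow> par y = x"
  by (simp add: children_def)

lemma lev_less_if_child: "y \<in> N x \<Longrightarrow> lev y < lev x"
  using lev_par[of y] by (simp add: mem_children_iff)

lemma common_ancestor: "\<exists>n m. (par ^^ n) x = (par ^^ m) y"
  using level_tree unfolding level_tree_def by blast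

lemma jacobi_eq:
  fixes u :: "'a \<Rightarrow> complex"
  shows "J u x = lam x * u (par x) + bet x * u x + (\<Sum>y\<in>N x. lam y * u y)"
  by (simp add: jacobi_def)

lemma jacobi_add:
  fixes f g :: "'a \<Rightarrow> complex"
  shows "J (\<lambda>x. f x + g x) = (\<lambda>x. J f x + J g x)"
  by (simp add: jacobi_def algebra_simps sum.distrib)

lemma jacobi_diff:
  fixes f g :: "'a \<Rightarrow> complex"
  shows "J (\<lambda>x. f x - g x) = (\<lambda>x. J f x - J g x)"
  by (simp add: jacobi_def algebra_simps sum_subtractf)

lemma jacobi_mult_left:
  fixes f :: "'a \<Rightarrow> complex"
  shows "J (\<lambda>x. c * f x) = (\<lambda>x. c * J f x)"
  by (simp add: jacobi_def algebra_simps sum_distrib_left)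

lemma jacobi_cnj:
  fixes f :: "'a \<Rightarrow> complex"
  shows "J (\<lambda>x. cnj (f x)) = (\<lambda>x. cnj (J f x))"
  by (simp add: jacobi_def)

lemma jacobi_zero: "J (\<lambda>_. 0) = (\<lambda>_. 0)"
  by (simp add: jacobi_def)

text \<open>By induction on the level: the Wronskians on the edges below \<open>x\<close> vanish, so the two
  equations at \<open>x\<close> leave only the edge from \<open>x\<close> to its parent.\<close>
lemma wronskian_eq_0:
  fixes u v :: "'a \<Rightarrow> complex"
  assumes u: "\<And>x. J u x = z * u x" and v: "\<And>x. J v x = z * v x"
  shows "u (par x) * v x = u x * v (par x)"
proof (induction "lev x" arbitrary: x rule: less_induct)
  case less
  define Su Sv where "Su = (\<Sum>y\<in>N x. lam y * u y)" and "Sv = (\<Sum>y\<in>N x. lam y * v y)"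
  have "lam x * u (par x) + bet x * u x + Su = z * u x"
    using u[of x] by (simp add: jacobi_eq Su_def)
  moreover have "lam x * v (par x) + bet x * v x + Sv = z * v x"
    using v[of x] by (simp add: jacobi_eq Sv_def)
  moreover have "(\<Sum>y\<in>N x. lam y * (u x * v y - v x * u y)) = 0"
    using less lev_less_if_child by (auto simp: mem_children_iff intro!: sum.neutral)
  hence "u x * Sv - v x * Su = 0"
    by (simp add: Su_def Sv_def sum_subtractf sum_distrib_left algebra_simps)
  ultimately have "lam x * (u (par x) * v x - u x * v (par x)) = 0"
    by algebra
  thus ?case using lam_pos[of x] by simp
qed

definition flux :: "('a \<Rightarrow> complex) \<Rightarrow> 'a \<Rightarrow> real" where
  "flux v x = lam x * Im (v (par x) * cnj (v x))"

lemma flux_recursion: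
  fixes v :: "'a \<Rightarrow> complex"
  assumes "\<And>x. J v x = z * v x"
  shows "flux v x = Im z * (cmod (v x))\<^sup>2 + (\<Sum>y\<in>N x. flux v y)"
proof -
  have "cnj (v x) * J v x = z * (v x * cnj (v x))"
    using assms[of x] by (simp add: algebra_simps)
  hence "Im (cnj (v x) * J v x) = Im z * (cmod (v x))\<^sup>2"
    by (simp only: complex_norm_square[symmetric]) simp
  moreover have "Im (cnj (v x) * J v x) = flux v x - (\<Sum>y\<in>N x. flux v y)"
  proof -
    have "(\<Sum>y\<in>N x. flux v y) = (\<Sum>y\<in>N x. - (lam y * Im (cnj (v x) * v y)))"
      by (rule sum.cong) (auto simp: flux_def mem_children_iff algebra_simps)
    moreover have "Im (cnj (v x) * J v x)
        = lam x * Im (cnj (v x) * v (par x)) + (\<Sum>y\<in>N x. lam y * Im (cnj (v x) * v y))"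
      by (simp add: jacobi_eq algebra_simps sum_distrib_left)
    moreover have "flux v x = lam x * Im (cnj (v x) * v (par x))"
      by (simp only: flux_def mult.commute)
    ultimately show ?thesis by (simp only: sum_negf)
  qed
  ultimately show ?thesis by simp
qed

text \<open>\<open>flux v x / Im z\<close> is the squared \<open>\<ell>\<^sup>2\<close>-mass of \<open>v\<close> on the finite subtree below \<open>x\<close>.\<close>
lemma flux_div_Im_ge:
  fixes v :: "'a \<Rightarrow> complex"
  assumes "\<And>x. J v x = z * v x" and "Im z \<noteq> 0"
  shows "(cmod (v x))\<^sup>2 \<le> flux v x / Im z"
proof (induction "lev x" arbitrary: x rule: less_induct)
  case less
  have "0 \<le> flux v y / Im z" if "y \<in> N x" for y
    using less[OF lev_less_if_child[OF that]] zero_le_power2[of "cmod (v y)"] by linarith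
  hence "0 \<le> (\<Sum>y\<in>N x. flux v y) / Im z"
    unfolding sum_divide_distrib by (rule sum_nonneg)
  moreover have "flux v x / Im z = (cmod (v x))\<^sup>2 + (\<Sum>y\<in>N x. flux v y) / Im z"
    using flux_recursion[OF assms(1), of x] assms(2) by (simp add: field_simps)
  ultimately show ?case by linarith
qed

lemma eigenfunction_vanishes_on_children:
  fixes v :: "'a \<Rightarrow> complex"
  assumes eigen: "\<And>x. J v x = z * v x" and "Im z \<noteq> 0" and "v x = 0" and "y \<in> N x"
  shows "v y = 0"
proof -
  define m where "m y = flux v y / Im z" for y
  have nonneg: "0 \<le> m y" for y
    using flux_div_Im_ge[OF assms(1,2), of y] zero_le_power2[of "cmod (v y)"]
    unfolding m_def by linarith
  have "flux v x = 0" using \<open>v x = 0\<close> by (simp add: flux_def)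
  hence "sum (flux v) (N x) = 0"
    using flux_recursion[OF eigen, of x] \<open>v x = 0\<close> by simp
  hence "sum m (N x) = 0"
    unfolding m_def by (simp only: sum_divide_distrib[symmetric] div_0)
  hence "m y = 0"
    using sum_nonneg_eq_0_iff[OF finite_children, where f = m] nonneg \<open>y \<in> N x\<close> by simp
  moreover have "(cmod (v y))\<^sup>2 \<le> m y"
    using flux_div_Im_ge[OF assms(1,2), of y] by (simp only: m_def)
  ultimately show ?thesis by simp
qed

lemma eigenfunction_vanishes_at_parent:
  fixes v :: "'a \<Rightarrow> complex"
  assumes "\<And>x. J v x = z * v x" and "Im z \<noteq> 0" and "v x = 0"
  shows "v (par x) = 0"
proof -
  have "(\<Sum>y\<in>N x. lam y * v y) = 0"
    using eigenfunction_vanishes_on_children[OF assms] by simp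
  thus ?thesis
    using assms(1)[of x] \<open>v x = 0\<close> lam_pos[of x] by (simp add: jacobi_eq)
qed

lemma fin_supp_jacobi:
  fixes f :: "'a \<Rightarrow> complex"
  assumes "fin_supp f"
  shows "fin_supp (J f)"
proof -
  define S where "S = {x. f x \<noteq> 0}"
  have "{y. J f y \<noteq> 0} \<subseteq> S \<union> par ` S \<union> (\<Union>x\<in>S. N x)"
  proof (rule subsetI, rule ccontr)
    fix y
    assume "y \<in> {y. J f y \<noteq> 0}" and "y \<notin> S \<union> par ` S \<union> (\<Union>x\<in>S. N x)"
    hence "J f y \<noteq> 0" "f y = 0" "f (par y) = 0" "\<forall>k\<in>N y. f k = 0"
      by (auto simp: S_def mem_children_iff)
    thus False by (simp add: jacobi_eq)
  qed
  moreover have "finite (S \<union> par ` S \<union> (\<Union>x\<in>S. N x))"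
    using assms finite_children by (simp add: S_def fin_supp_def)
  ultimately show ?thesis
    unfolding fin_supp_def by (rule finite_subset)
qed

lemma jacobi_delta:
  fixes c :: complex
  shows "J (delta a c) y = (if par y = a then lam y * c else 0) + (if y = a then bet a * c else 0)
    + (if y = par a then lam a * c else 0)"
proof -
  have "(\<Sum>k\<in>N y. lam k * delta a c k) = (\<Sum>k\<in>N y. if k = a then lam a * c else 0)"
    by (rule sum.cong) (auto simp: delta_def)
  also have "\<dots> = (if y = par a then lam a * c else 0)"
    using finite_children[of y] by (auto simp: mem_children_iff)
  finally show ?thesis by (simp add: jacobi_eq delta_def)
qed

lemma l2_inner_jacobi_delta:
  fixes c :: complex and g :: "'a \<Rightarrow> complex"
  shows "l2_inner (J (delta a c)) g = c * cnj (J g a)"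
proof -
  define S where "S = insert a (insert (par a) (N a))"
  have "finite S" using finite_children by (simp add: S_def)
  have "l2_inner (J (delta a c)) g = (\<Sum>y\<in>S. J (delta a c) y * cnj (g y))"
    unfolding l2_inner_def
    by (rule infsum_eq_sum_if_vanishes_outside[OF \<open>finite S\<close>]) (auto simp: S_def jacobi_delta mem_children_iff)
  also have "\<dots> = (\<Sum>y\<in>S. (if par y = a then lam y * c * cnj (g y) else 0)
      + (if y = a then bet a * c * cnj (g y) else 0)
      + (if y = par a then lam a * c * cnj (g y) else 0))"
    by (rule sum.cong) (simp_all add: jacobi_delta distrib_right)
  also have "\<dots> = (\<Sum>y\<in>S. if par y = a then lam y * c * cnj (g y) else 0)
      + (\<Sum>y\<in>S. if y = a then bet a * c * cnj (g y) else 0)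
      + (\<Sum>y\<in>S. if y = par a then lam a * c * cnj (g y) else 0)"
    by (simp only: sum.distrib)
  also have "(\<Sum>y\<in>S. if par y = a then lam y * c * cnj (g y) else 0)
      = (\<Sum>y\<in>N a. lam y * c * cnj (g y))"
  proof -
    have "{y\<in>S. par y = a} = N a" by (auto simp: S_def mem_children_iff)
    thus ?thesis by (simp add: sum.inter_filter[OF \<open>finite S\<close>, symmetric])
  qed
  also have "(\<Sum>y\<in>S. if y = a then bet a * c * cnj (g y) else 0) = bet a * c * cnj (g a)"
    using \<open>finite S\<close> by (simp add: S_def)
  also have "(\<Sum>y\<in>S. if y = par a then lam a * c * cnj (g y) else 0) = lam a * c * cnj (g (par a))"
    using \<open>finite S\<close> by (simp add: S_def)
  also have "(\<Sum>y\<in>N a. lam y * c * cnj (g y)) + bet a * c * cnj (g a) + lam a * c * cnj (g (par a))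
      = c * cnj (J g a)"
    by (simp add: jacobi_eq algebra_simps sum_distrib_left)
  finally show ?thesis .
qed

lemma jacobi_symmetric:
  fixes \<phi> \<psi> :: "'a \<Rightarrow> complex"
  assumes "fin_supp \<phi>"
  shows "l2_inner (J \<phi>) \<psi> = l2_inner \<phi> (J \<psi>)"
proof -
  have "\<forall>\<phi>. {x. \<phi> x \<noteq> 0} \<subseteq> S \<longrightarrow> l2_inner (J \<phi>) \<psi> = l2_inner \<phi> (J \<psi>)" if "finite S" for S
    using that
  proof (induction S rule: finite_induct)
    case empty
    thus ?case by (simp add: jacobi_zero l2_inner_def)
  next
    case (insert a S)
    show ?case
    proof (intro allI impI)
      fix \<phi> :: "'a \<Rightarrow> complex"
      assume supp: "{x. \<phi> x \<noteq> 0} \<subseteq> insert a S"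
      define \<phi>' c where "\<phi>' = \<phi>(a := 0)" and "c = \<phi> a"
      have "{x. \<phi>' x \<noteq> 0} \<subseteq> S" using supp by (auto simp: \<phi>'_def)
      hence "fin_supp \<phi>'" unfolding fin_supp_def using insert(1) by (rule finite_subset)
      have split: "\<phi> = (\<lambda>x. \<phi>' x + delta a c x)"
        by (auto simp: \<phi>'_def c_def delta_def)
      have "l2_inner (J \<phi>) \<psi> = l2_inner (J \<phi>') \<psi> + l2_inner (J (delta a c)) \<psi>"
        by (simp only: split jacobi_add)
          (intro l2_inner_fin_supp_add_left fin_supp_jacobi fin_supp_delta \<open>fin_supp \<phi>'\<close>)
      also have "\<dots> = l2_inner \<phi>' (J \<psi>) + l2_inner (delta a c) (J \<psi>)"
        using insert(3) \<open>{x. \<phi>' x \<noteq> 0} \<subseteq> S\<close> by (simp add: l2_inner_jacobi_delta l2_inner_delta_left)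
      also have "\<dots> = l2_inner \<phi> (J \<psi>)"
        by (simp only: split)
          (rule l2_inner_fin_supp_add_left[symmetric, OF \<open>fin_supp \<phi>'\<close> fin_supp_delta])
      finally show "l2_inner (J \<phi>) \<psi> = l2_inner \<phi> (J \<psi>)" .
    qed
  qed
  thus ?thesis using assms unfolding fin_supp_def by blast
qed

section \<open>The closure and the adjoint of the minimal operator\<close>

abbreviation G :: "(('a \<Rightarrow> complex) \<times> ('a \<Rightarrow> complex)) set" where
  "G \<equiv> jacobi_graph par lam bet"

lemma op_closure_jacobi_graph_iff:
  "(u, w) \<in> op_closure G \<longleftrightarrow> l2 u \<and> l2 w \<and> (\<exists>F. (\<forall>n. fin_supp (F n))
     \<and> (\<lambda>n. l2_norm (\<lambda>x. F n x - u x)) \<longlonglongrightarrow> 0 \<and> (\<lambda>n. l2_norm (\<lambda>x. J (F n) x - w x)) \<longlonglongrightarrow> 0)"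
    (is "_ \<longleftrightarrow> l2 u \<and> l2 w \<and> (\<exists>F. ?approx F)")
proof
  assume "(u, w) \<in> op_closure G"
  then obtain F W where "l2 u" "l2 w" and FW: "\<And>n. (F n, W n) \<in> G"
    and lim_u: "(\<lambda>n. l2_norm (F n - u)) \<longlonglongrightarrow> 0" and lim_w: "(\<lambda>n. l2_norm (W n - w)) \<longlonglongrightarrow> 0"
    unfolding op_closure_def by blast
  have "fin_supp (F n)" "W n = J (F n)" for n
    using FW[of n] by (auto simp: jacobi_graph_def)
  hence "?approx F"
    using lim_u lim_w by (simp add: fun_diff_def)
  thus "l2 u \<and> l2 w \<and> (\<exists>F. ?approx F)"
    using \<open>l2 u\<close> \<open>l2 w\<close> by blast
next
  assume "l2 u \<and> l2 w \<and> (\<exists>F. ?approx F)"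
  then obtain F where "l2 u" "l2 w" "?approx F" by blast
  hence approx: "\<forall>n. (F n, J (F n)) \<in> G" "(\<lambda>n. l2_norm (F n - u)) \<longlonglongrightarrow> 0"
    "(\<lambda>n. l2_norm (J (F n) - w)) \<longlonglongrightarrow> 0"
    by (simp_all add: jacobi_graph_def fun_diff_def)
  show "(u, w) \<in> op_closure G"
    unfolding op_closure_def mem_Collect_eq case_prod_conv
    by (intro conjI exI[of _ F] exI[of _ "\<lambda>n. J (F n)"] approx \<open>l2 u\<close> \<open>l2 w\<close>)
qed

lemma jacobi_graph_subset_op_closure: "fin_supp f \<Longrightarrow> (f, J f) \<in> op_closure G"
  unfolding op_closure_jacobi_graph_iff
  by (intro conjI exI[of _ "\<lambda>_. f"]) (auto simp: fin_supp_imp_l2 fin_supp_jacobi l2_norm_def)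

lemma op_closure_jacobi_graph_imp_eq:
  assumes "(u, w) \<in> op_closure G"
  shows "w = J u"
proof
  fix x
  obtain F where F: "\<And>n. fin_supp (F n)" and "l2 u" "l2 w"
    and lim_u: "(\<lambda>n. l2_norm (\<lambda>x. F n x - u x)) \<longlonglongrightarrow> 0"
    and lim_w: "(\<lambda>n. l2_norm (\<lambda>x. J (F n) x - w x)) \<longlonglongrightarrow> 0"
    using assms unfolding op_closure_jacobi_graph_iff by blast
  have "(\<lambda>n. F n y) \<longlonglongrightarrow> u y" for y
    using tendsto_pointwise_if_l2[OF fin_supp_imp_l2[OF F] \<open>l2 u\<close> lim_u] .
  hence "(\<lambda>n. J (F n) x) \<longlonglongrightarrow> J u x"
    unfolding jacobi_eq by (intro tendsto_intros)
  moreover have "(\<lambda>n. J (F n) x) \<longlonglongrightarrow> w x"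
    using tendsto_pointwise_if_l2[OF fin_supp_imp_l2[OF fin_supp_jacobi[OF F]] \<open>l2 w\<close> lim_w] .
  ultimately show "w x = J u x"
    using LIMSEQ_unique by blast
qed

lemma op_adjoint_op_closure_jacobi_graph_iff:
  "(u, w) \<in> op_adjoint (op_closure G) \<longleftrightarrow> l2 u \<and> l2 w \<and> w = J u"
proof
  assume uw: "(u, w) \<in> op_adjoint (op_closure G)"
  hence "l2 u" "l2 w" unfolding op_adjoint_def by auto
  moreover have "w x = J u x" for x
  proof -
    have "(delta x 1, J (delta x 1)) \<in> op_closure G"
      by (rule jacobi_graph_subset_op_closure[OF fin_supp_delta])
    hence "l2_inner (J (delta x 1)) u = l2_inner (delta x 1) w"
      using uw unfolding op_adjoint_def by blast
    thus ?thesis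
      by (simp add: l2_inner_jacobi_delta l2_inner_delta_left)
  qed
  ultimately show "l2 u \<and> l2 w \<and> w = J u" by auto
next
  assume "l2 u \<and> l2 w \<and> w = J u"
  hence "l2 u" "l2 w" "w = J u" by auto
  have "l2_inner g u = l2_inner f w" if fg: "(f, g) \<in> op_closure G" for f g
  proof -
    obtain F where F: "\<And>n. fin_supp (F n)" and "l2 f" "l2 g"
      and lim_f: "(\<lambda>n. l2_norm (\<lambda>x. F n x - f x)) \<longlonglongrightarrow> 0"
      and lim_g: "(\<lambda>n. l2_norm (\<lambda>x. J (F n) x - g x)) \<longlonglongrightarrow> 0"
      using fg unfolding op_closure_jacobi_graph_iff by blast
    have "(\<lambda>n. l2_inner (J (F n)) u) \<longlonglongrightarrow> l2_inner g u"
      using tendsto_l2_inner_left[OF fin_supp_imp_l2[OF fin_supp_jacobi[OF F]] \<open>l2 g\<close> \<open>l2 u\<close> lim_g] .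
    moreover have "(\<lambda>n. l2_inner (J (F n)) u) \<longlonglongrightarrow> l2_inner f w"
      using tendsto_l2_inner_left[OF fin_supp_imp_l2[OF F] \<open>l2 f\<close> \<open>l2 w\<close> lim_f]
      by (simp add: jacobi_symmetric[OF F] \<open>w = J u\<close>)
    ultimately show ?thesis by (rule LIMSEQ_unique)
  qed
  thus "(u, w) \<in> op_adjoint (op_closure G)"
    unfolding op_adjoint_def using \<open>l2 u\<close> \<open>l2 w\<close> by auto
qed

lemma op_closure_subset_op_adjoint: "op_closure G \<subseteq> op_adjoint (op_closure G)"
proof (rule subrelI)
  fix u w
  assume "(u, w) \<in> op_closure G"
  moreover from this have "l2 u" "l2 w"
    unfolding op_closure_jacobi_graph_iff by auto
  ultimately show "(u, w) \<in> op_adjoint (op_closure G)"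
    by (simp add: op_adjoint_op_closure_jacobi_graph_iff op_closure_jacobi_graph_imp_eq)
qed

definition J_shift :: "complex \<Rightarrow> ('a \<Rightarrow> complex) \<Rightarrow> 'a \<Rightarrow> complex" where
  "J_shift z \<phi> = (\<lambda>x. J \<phi> x - z * \<phi> x)"

lemma fin_supp_J_shift: "fin_supp \<phi> \<Longrightarrow> fin_supp (J_shift z \<phi>)"
  unfolding J_shift_def by (intro fin_supp_diff fin_supp_jacobi fin_supp_mult_left)

lemma J_shift_add: "J_shift z (\<lambda>x. f x + g x) = (\<lambda>x. J_shift z f x + J_shift z g x)"
  by (simp add: J_shift_def jacobi_add algebra_simps)

lemma J_shift_diff: "J_shift z (\<lambda>x. f x - g x) = (\<lambda>x. J_shift z f x - J_shift z g x)"
  by (simp add: J_shift_def jacobi_diff algebra_simps)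

lemma J_shift_mult_left: "J_shift z (\<lambda>x. c * f x) = (\<lambda>x. c * J_shift z f x)"
  by (simp add: J_shift_def jacobi_mult_left algebra_simps)

text \<open>Since \<open>\<langle>J\<phi>, \<phi>\<rangle>\<close> is real, \<open>Im \<langle>(J - z)\<phi>, \<phi>\<rangle> = - Im z \<parallel>\<phi>\<parallel>\<^sup>2\<close>; Cauchy--Schwarz does
  the rest.\<close>
lemma J_shift_lower_bound:
  assumes "fin_supp \<phi>"
  shows "\<bar>Im z\<bar> * l2_norm \<phi> \<le> l2_norm (J_shift z \<phi>)"
proof -
  have "l2 \<phi>" "l2 (J \<phi>)" "l2 (J_shift z \<phi>)"
    using assms by (simp_all add: fin_supp_imp_l2 fin_supp_jacobi fin_supp_J_shift)
  have self_adjoint: "l2_inner (J \<phi>) \<phi> = cnj (l2_inner (J \<phi>) \<phi>)"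
    using jacobi_symmetric[OF assms, of \<phi>] l2_inner_commute[of \<phi> "J \<phi>"] by (rule trans)
  have "Im (l2_inner (J \<phi>) \<phi>) = 0"
    using arg_cong[OF self_adjoint, of Im] by simp
  hence "Im (l2_inner (J_shift z \<phi>) \<phi>) = - Im z * (l2_norm \<phi>)\<^sup>2"
    unfolding J_shift_def
    by (simp add: l2_inner_diff_left l2_inner_mult_left l2_mult_left l2_inner_self
        \<open>l2 \<phi>\<close> \<open>l2 (J \<phi>)\<close>)
  hence "\<bar>Im z\<bar> * (l2_norm \<phi> * l2_norm \<phi>) = \<bar>Im (l2_inner (J_shift z \<phi>) \<phi>)\<bar>"
    by (simp add: abs_mult power2_eq_square)
  also have "\<dots> \<le> cmod (l2_inner (J_shift z \<phi>) \<phi>)"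
    by (rule abs_Im_le_cmod)
  also have "\<dots> \<le> l2_norm (J_shift z \<phi>) * l2_norm \<phi>"
    by (rule l2_inner_cauchy_schwarz) fact+
  finally have "\<bar>Im z\<bar> * l2_norm \<phi> * l2_norm \<phi> \<le> l2_norm (J_shift z \<phi>) * l2_norm \<phi>"
    by (simp only: mult.assoc)
  thus ?thesis
    using l2_norm_nonneg[of \<phi>] l2_norm_nonneg[of "J_shift z \<phi>"]
    by (cases "l2_norm \<phi> = 0") (auto dest: mult_right_le_imp_le)
qed

lemma J_shift_orthogonal_imp_eigen:
  assumes "l2 \<rho>" and orth: "\<And>\<phi>. fin_supp \<phi> \<Longrightarrow> Re (l2_inner \<rho> (J_shift z \<phi>)) = 0"
  shows "J \<rho> x = cnj z * \<rho> x"
proof -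
  have "Re (c * cnj (J \<rho> x - cnj z * \<rho> x)) = 0" for c
  proof -
    have "l2 (delta x c)" "l2 (J (delta x c))"
      by (simp_all add: fin_supp_imp_l2 fin_supp_jacobi fin_supp_delta)
    hence "l2_inner (J_shift z (delta x c)) \<rho> = c * cnj (J \<rho> x - cnj z * \<rho> x)"
      unfolding J_shift_def
      by (simp add: l2_inner_diff_left l2_mult_left \<open>l2 \<rho>\<close> l2_inner_mult_left
          l2_inner_jacobi_delta l2_inner_delta_left algebra_simps)
    moreover have "Re (l2_inner (J_shift z (delta x c)) \<rho>) = 0"
      using orth[OF fin_supp_delta, of x c] by (subst l2_inner_commute) simp
    ultimately show ?thesis by simp
  qed
  from this[of 1] this[of \<i>] show ?thesis
    by (simp add: complex_eq_iff)
qed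

lemma op_closure_if_J_shift_converges:
  assumes "\<And>n. fin_supp (\<phi>s n)" and "l2 f" and "l2 g"
    and lim_f: "(\<lambda>n. l2_norm (\<lambda>x. \<phi>s n x - f x)) \<longlonglongrightarrow> 0"
    and lim_g: "(\<lambda>n. l2_norm (\<lambda>x. J_shift z (\<phi>s n) x - g x)) \<longlonglongrightarrow> 0"
  shows "(f, \<lambda>x. g x + z * f x) \<in> op_closure G"
proof -
  have l2_\<phi>s: "l2 (\<phi>s n)" and l2_J_shift: "l2 (J_shift z (\<phi>s n))" for n
    using assms(1) by (simp_all add: fin_supp_imp_l2 fin_supp_J_shift)
  have "l2_norm (\<lambda>x. J (\<phi>s n) x - (g x + z * f x))
      \<le> l2_norm (\<lambda>x. J_shift z (\<phi>s n) x - g x) + cmod z * l2_norm (\<lambda>x. \<phi>s n x - f x)" for n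
  proof -
    have "(\<lambda>x. J (\<phi>s n) x - (g x + z * f x))
        = (\<lambda>x. (J_shift z (\<phi>s n) x - g x) + z * (\<phi>s n x - f x))"
      by (simp add: J_shift_def algebra_simps)
    thus ?thesis
      using l2_triangle[OF l2_diff[OF l2_J_shift \<open>l2 g\<close>] l2_mult_left[OF l2_diff[OF l2_\<phi>s \<open>l2 f\<close>]]]
      by (simp add: l2_norm_mult_left)
  qed
  hence "norm (l2_norm (\<lambda>x. J (\<phi>s n) x - (g x + z * f x)))
      \<le> l2_norm (\<lambda>x. J_shift z (\<phi>s n) x - g x) + cmod z * l2_norm (\<lambda>x. \<phi>s n x - f x)" for n
    by (simp add: l2_norm_nonneg)
  moreover have "(\<lambda>n. l2_norm (\<lambda>x. J_shift z (\<phi>s n) x - g x) + cmod z * l2_norm (\<lambda>x. \<phi>s n x - f x))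
      \<longlonglongrightarrow> 0"
    using tendsto_add[OF lim_g tendsto_mult_right_zero[OF lim_f]] by simp
  ultimately have "(\<lambda>n. l2_norm (\<lambda>x. J (\<phi>s n) x - (g x + z * f x))) \<longlonglongrightarrow> 0"
    by (rule Lim_null_comparison[OF always_eventually, OF allI])
  thus ?thesis
    unfolding op_closure_jacobi_graph_iff
    using assms(1) lim_f \<open>l2 f\<close> \<open>l2 g\<close> l2_add l2_mult_left by blast
qed

end

section \<open>Essential self-adjointness\<close>

locale jacobi_tree_eigenfunction = jacobi_tree +
  fixes z :: complex and v :: "'a \<Rightarrow> complex"
  assumes nonreal: "Im z \<noteq> 0" and nonzero: "v \<noteq> (\<lambda>_. 0)" and eigen: "\<And>x. J v x = z * v x"
begin

lemma eigenfunction_nonvanishing: "v x \<noteq> 0"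
proof
  assume "v x = 0"
  have up: "v ((par ^^ m) x) = 0" for m
    by (induction m) (simp_all add: \<open>v x = 0\<close> eigenfunction_vanishes_at_parent[OF eigen nonreal])
  have down: "v ((par ^^ n) y) = 0 \<Longrightarrow> v y = 0" for n y
  proof (induction n arbitrary: y)
    case (Suc n)
    hence "v (par y) = 0" by (simp add: funpow_Suc_right del: funpow.simps)
    thus ?case
      using eigenfunction_vanishes_on_children[OF eigen nonreal, of "par y" y]
      by (simp add: mem_children_iff)
  qed simp
  have "v y = 0" for y
    using common_ancestor[of y x] up down by metis
  thus False using nonzero by auto
qed

lemma eigenfunction_proportional:
  fixes u :: "'a \<Rightarrow> complex"
  assumes u: "\<And>x. J u x = z * u x"
  obtains c where "u = (\<lambda>x. c * v x)"
proof -
  have step: "u (par x) / v (par x) = u x / v x" for x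
    using wronskian_eq_0[OF u eigen, of x] eigenfunction_nonvanishing[of x]
      eigenfunction_nonvanishing[of "par x"]
    by (simp add: field_simps)
  have iter: "u ((par ^^ n) x) / v ((par ^^ n) x) = u x / v x" for n x
    by (induction n) (simp_all add: step)
  fix x0
  have "u y = u x0 / v x0 * v y" for y
  proof -
    obtain n m where "(par ^^ n) y = (par ^^ m) x0"
      using common_ancestor by blast
    hence "u y / v y = u x0 / v x0"
      using iter[of n y] iter[of m x0] by simp
    thus ?thesis
      using eigenfunction_nonvanishing[of y] by (simp add: field_simps)
  qed
  thus thesis using that by blast
qed

lemma l2_eigenfunction_eq_0:
  fixes u :: "'a \<Rightarrow> complex"
  assumes "\<not> l2 v" and "\<And>x. J u x = z * u x" and "l2 u"
  shows "u = (\<lambda>_. 0)"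
proof -
  obtain c where c: "u = (\<lambda>x. c * v x)"
    using eigenfunction_proportional[OF assms(2)] by blast
  have "c = 0"
  proof (rule ccontr)
    assume "c \<noteq> 0"
    hence "v = (\<lambda>x. (1 / c) * u x)" by (simp add: c)
    thus False using l2_mult_left[OF \<open>l2 u\<close>] \<open>\<not> l2 v\<close> by metis
  qed
  thus ?thesis by (simp add: c)
qed

lemma not_self_adjoint_if_l2:
  assumes "l2 v"
  shows "\<not> self_adjoint_op (op_closure G)"
proof
  assume self_adjoint: "self_adjoint_op (op_closure G)"
  have Jv: "J v = (\<lambda>x. z * v x)" using eigen by auto
  have adj: "(v, J v) \<in> op_adjoint (op_closure G)"
    by (simp add: op_adjoint_op_closure_jacobi_graph_iff Jv assms l2_mult_left)
  hence "(v, J v) \<in> op_closure G"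
    using self_adjoint by (simp add: self_adjoint_op_def)
  hence "l2_inner (J v) v = l2_inner v (J v)"
    using adj unfolding op_adjoint_def by blast
  hence "z * l2_inner v v = cnj z * l2_inner v v"
    by (simp add: Jv l2_inner_mult_left l2_inner_mult_right)
  moreover have "l2_inner v v \<noteq> 0"
    using l2_norm_eq_0_iff[OF assms] nonzero by (simp add: l2_inner_self)
  ultimately have "z = cnj z" by simp
  thus False using nonreal by (simp add: complex_eq_iff)
qed

text \<open>A vector orthogonal to the range of \<open>J - z\<close> is, after conjugation, a square-summable
  solution of \<open>Ju = zu\<close>, hence zero.\<close>
lemma dense_J_shift_range:
  assumes "\<not> l2 v"
  shows "closure {Abs_ell2 (J_shift z \<phi>) | \<phi>. fin_supp \<phi>} = UNIV"
proof (rule dense_if_orthogonal_complement_trivial)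
  let ?W = "{Abs_ell2 (J_shift z \<phi>) | \<phi>. fin_supp \<phi>}"
  have l2_J_shift: "l2 (J_shift z \<phi>)" if "fin_supp \<phi>" for \<phi>
    using fin_supp_imp_l2[OF fin_supp_J_shift[OF that]] .
  show "subspace ?W"
    unfolding subspace_def
  proof (intro conjI ballI allI)
    have "J_shift z (\<lambda>_. 0) = (\<lambda>_. 0)" by (simp add: J_shift_def jacobi_zero)
    hence "0 = Abs_ell2 (J_shift z (\<lambda>_. 0))" by (simp add: Abs_ell2_zero)
    thus "0 \<in> ?W" using fin_supp_zero by blast
    show "x + y \<in> ?W" if xy: "x \<in> ?W" "y \<in> ?W" for x y
    proof -
      obtain \<phi> \<psi> where "fin_supp \<phi>" "fin_supp \<psi>"
        and "x = Abs_ell2 (J_shift z \<phi>)" "y = Abs_ell2 (J_shift z \<psi>)"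
        using xy by blast
      hence "x + y = Abs_ell2 (J_shift z (\<lambda>a. \<phi> a + \<psi> a))"
        by (simp add: Abs_ell2_add J_shift_add l2_J_shift)
      thus ?thesis using fin_supp_add[OF \<open>fin_supp \<phi>\<close> \<open>fin_supp \<psi>\<close>] by blast
    qed
    show "c *\<^sub>R x \<in> ?W" if x: "x \<in> ?W" for c x
    proof -
      obtain \<phi> where "fin_supp \<phi>" "x = Abs_ell2 (J_shift z \<phi>)"
        using x by blast
      hence "c *\<^sub>R x = Abs_ell2 (J_shift z (\<lambda>a. complex_of_real c * \<phi> a))"
        by (simp add: scaleR_Abs_ell2 J_shift_mult_left l2_J_shift)
      thus ?thesis using fin_supp_mult_left[OF \<open>fin_supp \<phi>\<close>] by blast
    qed
  qed
  show "r = 0" if orth: "\<forall>w\<in>?W. inner r w = 0" for r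
  proof -
    define \<rho> where "\<rho> = Rep_ell2 r"
    have "l2 \<rho>" by (simp add: \<rho>_def l2_Rep_ell2)
    have "Re (l2_inner \<rho> (J_shift z \<phi>)) = 0" if "fin_supp \<phi>" for \<phi>
      using orth that inner_Abs_ell2[OF \<open>l2 \<rho>\<close> l2_J_shift[OF that]]
      by (auto simp: \<rho>_def Rep_ell2_inverse)
    hence "J \<rho> x = cnj z * \<rho> x" for x
      by (rule J_shift_orthogonal_imp_eigen[OF \<open>l2 \<rho>\<close>])
    hence "J (\<lambda>x. cnj (\<rho> x)) x = z * cnj (\<rho> x)" for x
      by (simp add: jacobi_cnj)
    hence "(\<lambda>x. cnj (\<rho> x)) = (\<lambda>_. 0)"
      using l2_eigenfunction_eq_0[OF assms] l2_cnj[OF \<open>l2 \<rho>\<close>] by blast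
    hence "Rep_ell2 r = Rep_ell2 0"
      by (simp add: \<rho>_def zero_ell2.rep_eq fun_eq_iff)
    thus "r = 0" by (simp add: Rep_ell2_inject)
  qed
qed

lemma op_closure_contains_resolvent_solution:
  assumes "\<not> l2 v" and "l2 g"
  shows "\<exists>f. (f, \<lambda>x. g x + z * f x) \<in> op_closure G"
proof -
  have "Abs_ell2 g \<in> closure {Abs_ell2 (J_shift z \<phi>) | \<phi>. fin_supp \<phi>}"
    using dense_J_shift_range[OF assms(1)] by simp
  then obtain Y where Y: "\<And>n. Y n \<in> {Abs_ell2 (J_shift z \<phi>) | \<phi>. fin_supp \<phi>}"
    and "Y \<longlonglongrightarrow> Abs_ell2 g"
    unfolding closure_sequential by blast
  have "\<forall>n. \<exists>\<phi>. fin_supp \<phi> \<and> Y n = Abs_ell2 (J_shift z \<phi>)"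
    using Y by blast
  then obtain \<phi>s where \<phi>s: "\<And>n. fin_supp (\<phi>s n)" and "\<And>n. Y n = Abs_ell2 (J_shift z (\<phi>s n))"
    by metis
  hence "Y = (\<lambda>n. Abs_ell2 (J_shift z (\<phi>s n)))" by blast
  hence lim: "(\<lambda>n. Abs_ell2 (J_shift z (\<phi>s n))) \<longlonglongrightarrow> Abs_ell2 g"
    using \<open>Y \<longlonglongrightarrow> Abs_ell2 g\<close> by simp
  have l2_\<phi>s: "l2 (\<phi>s n)" and l2_J_shift: "l2 (J_shift z (\<phi>s n))" for n
    using \<phi>s by (simp_all add: fin_supp_imp_l2 fin_supp_J_shift)
  have "Cauchy (\<lambda>n. Abs_ell2 (\<phi>s n))"
  proof (rule Cauchy_if_dist_le_mult)
    show "Cauchy (\<lambda>n. Abs_ell2 (J_shift z (\<phi>s n)))"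
      using lim by (rule LIMSEQ_imp_Cauchy)
    show "dist (Abs_ell2 (\<phi>s m)) (Abs_ell2 (\<phi>s n))
        \<le> (1 / \<bar>Im z\<bar>) * dist (Abs_ell2 (J_shift z (\<phi>s m))) (Abs_ell2 (J_shift z (\<phi>s n)))" for m n
      using J_shift_lower_bound[OF fin_supp_diff[OF \<phi>s \<phi>s], of z m n] nonreal
      by (simp add: dist_Abs_ell2 l2_\<phi>s l2_J_shift J_shift_diff field_simps)
  qed
  then obtain f where "l2 f" and "(\<lambda>n. Abs_ell2 (\<phi>s n)) \<longlonglongrightarrow> Abs_ell2 f"
    unfolding Cauchy_convergent_iff convergent_def
    by (metis Rep_ell2_inverse l2_Rep_ell2)
  hence "(f, \<lambda>x. g x + z * f x) \<in> op_closure G"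
    using lim by (intro op_closure_if_J_shift_converges[OF \<phi>s])
      (simp_all add: tendsto_Abs_ell2_iff l2_\<phi>s l2_J_shift \<open>l2 g\<close>)
  thus ?thesis by blast
qed

lemma self_adjoint_if_not_l2:
  assumes "\<not> l2 v"
  shows "self_adjoint_op (op_closure G)"
  unfolding self_adjoint_op_def
proof (rule equalityI[OF subrelI op_closure_subset_op_adjoint])
  fix u w
  assume "(u, w) \<in> op_adjoint (op_closure G)"
  hence "l2 u" "l2 w" "w = J u"
    unfolding op_adjoint_op_closure_jacobi_graph_iff by auto
  define g where "g x = w x - z * u x" for x
  have "l2 g" unfolding g_def using \<open>l2 u\<close> \<open>l2 w\<close> by (simp add: l2_diff l2_mult_left)
  then obtain f where f: "(f, \<lambda>x. g x + z * f x) \<in> op_closure G"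
    using op_closure_contains_resolvent_solution[OF assms] by blast
  have "J f = (\<lambda>x. g x + z * f x)"
    using op_closure_jacobi_graph_imp_eq[OF f] by simp
  hence "J (\<lambda>x. u x - f x) x = z * (u x - f x)" for x
    using fun_cong[OF \<open>J f = _\<close>, of x] by (simp add: jacobi_diff \<open>w = J u\<close> g_def algebra_simps)
  moreover have "l2 (\<lambda>x. u x - f x)"
    using \<open>l2 u\<close> op_closure_jacobi_graph_iff f by (blast intro: l2_diff)
  ultimately have "(\<lambda>x. u x - f x) = (\<lambda>_. 0)"
    using l2_eigenfunction_eq_0[OF assms] by blast
  hence "u = f" by (simp add: fun_eq_iff)
  thus "(u, w) \<in> op_closure G"
    using f \<open>J f = _\<close> \<open>w = J u\<close> by simp
qed

end

theorem corollary4: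
  fixes par :: "'a \<Rightarrow> 'a" and lev :: "'a \<Rightarrow> nat"
    and lam bet :: "'a \<Rightarrow> real" and z :: complex and v :: "'a \<Rightarrow> complex"
  assumes "level_tree par lev"
    and "\<And>x. lam x > 0"
    and "Im z \<noteq> 0"
    and "v \<noteq> (\<lambda>_. 0)"
    and "\<And>x. jacobi par lam bet v x = z * v x"
  shows "ess_self_adjoint (jacobi_graph par lam bet) \<longleftrightarrow> \<not> l2 v"
proof -
  interpret jacobi_tree_eigenfunction par lev lam bet z v
    by unfold_locales (use assms in auto)
  show ?thesis
    unfolding ess_self_adjoint_def
    using not_self_adjoint_if_l2 self_adjoint_if_not_l2 by blast
qed

end
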